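(* Let $K$ be a finite-dimensional Kantor triple system over $\Bbbk\in\{\mathbb{R},\mathbb{C}\}$, $L$ the span of the operators $\langle u,v\rangle$ on $K$, and for $a,b\in K$ let $\tilde K_{ab}:K\oplus L\to K\oplus L$ be $\tilde K_{ab}(z+Z)=-\tfrac16(z\,\langle a,b\rangle(z)\,z)-\tfrac12 Z(\langle a,b\rangle(z))+\tfrac1{12}\langle (z\,\langle a,b\rangle(z)\,z),z\rangle+\tfrac12\langle Z(a),Z(b)\rangle$ ($z\in K$, $Z\in L$). If $a,b,c,d\in K$ satisfy $\langle a,b\rangle=\langle c,d\rangle$ (as operators on $K$), then $\tilde K_{ab}=\tilde K_{cd}$.
   Context: A triple system is a vector space with trilinear product $(xyz)$; $\langle u,v\rangle$ denotes the linear operator $z\mapsto(uzv)-(vzu)$. A Kantor triple system (KTS) satisfies, for all $u,v,x,y,z$: $(uv(xyz))-(xy(uvz))=((uvx)yz)-(x(vuy)z)$ and $\langle\langle u,v\rangle(x),y\rangle=\langle (yxu),v\rangle-\langle (yxv),u\rangle$. *)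

theory Defs
  imports Complex_Main "HOL-Library.Function_Algebras"
begin

text \<open>A triple system on a vector space 'a over the field 'k, given by the scalar
multiplication s and the trilinear product t (written (x y z) in the paper).\<close>

definition br :: "('a \<Rightarrow> 'a \<Rightarrow> 'a \<Rightarrow> 'a) \<Rightarrow> 'a \<Rightarrow> 'a \<Rightarrow> 'a \<Rightarrow> 'a::ab_group_add" where
  "br t u v = (\<lambda>z. t u z v - t v z u)"

definition fin_dim :: "('k::field \<Rightarrow> 'a \<Rightarrow> 'a::ab_group_add) \<Rightarrow> bool" where
  "fin_dim s \<longleftrightarrow> (\<exists>B. finite B \<and> module.span s B = UNIV)"

definition trilinear :: "('k::field \<Rightarrow> 'a \<Rightarrow> 'a::ab_group_add) \<Rightarrow> ('a \<Rightarrow> 'a \<Rightarrow> 'a \<Rightarrow> 'a) \<Rightarrow> bool" where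
  "trilinear s t \<longleftrightarrow>
     (\<forall>y z. Vector_Spaces.linear s s (\<lambda>x. t x y z)) \<and>
     (\<forall>x z. Vector_Spaces.linear s s (\<lambda>y. t x y z)) \<and>
     (\<forall>x y. Vector_Spaces.linear s s (\<lambda>z. t x y z))"

definition fd_kts :: "('k::field \<Rightarrow> 'a \<Rightarrow> 'a::ab_group_add) \<Rightarrow> ('a \<Rightarrow> 'a \<Rightarrow> 'a \<Rightarrow> 'a) \<Rightarrow> bool" where
  "fd_kts s t \<longleftrightarrow> Vector_Spaces.vector_space s \<and> fin_dim s \<and> trilinear s t \<and>
     (\<forall>u v x y z. t u v (t x y z) - t x y (t u v z) = t (t u v x) y z - t x (t v u y) z) \<and>
     (\<forall>u v x y. br t (br t u v x) y = (\<lambda>w. br t (t y x u) v w - br t (t y x v) u w))"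

definition opscale :: "('k \<Rightarrow> 'a \<Rightarrow> 'a) \<Rightarrow> 'k \<Rightarrow> ('a \<Rightarrow> 'a) \<Rightarrow> ('a \<Rightarrow> 'a)" where
  "opscale s c f = (\<lambda>x. s c (f x))"

definition Lspan :: "('k::field \<Rightarrow> 'a \<Rightarrow> 'a::ab_group_add) \<Rightarrow> ('a \<Rightarrow> 'a \<Rightarrow> 'a \<Rightarrow> 'a) \<Rightarrow> ('a \<Rightarrow> 'a) set" where
  "Lspan s t = module.span (opscale s) {br t u v | u v. True}"

text \<open>The map tilde K_ab on K \<oplus> L, elements z + Z represented as pairs (z, Z).\<close>
definition Ktilde :: "('k::field \<Rightarrow> 'a \<Rightarrow> 'a::ab_group_add) \<Rightarrow> ('a \<Rightarrow> 'a \<Rightarrow> 'a \<Rightarrow> 'a) \<Rightarrow> 'a \<Rightarrow> 'a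
     \<Rightarrow> 'a \<times> ('a \<Rightarrow> 'a) \<Rightarrow> 'a \<times> ('a \<Rightarrow> 'a)" where
  "Ktilde s t a b p = (case p of (z, Z) \<Rightarrow>
     (s (- (1/6)) (t z (br t a b z) z) - s (1/2) (Z (br t a b z)),
      (\<lambda>w. s (1/12) (br t (t z (br t a b z) z) z w) + s (1/2) (br t (Z a) (Z b) w))))"

end

theory Submission
  imports Defs
begin

text \<open>For fixed a, b the expression \<open>B(X, Y) = \<langle>X a, Y b\<rangle> + \<langle>Y a, X b\<rangle>\<close> (\<open>br_polar t a b X Y\<close>) is a symmetric
bilinear form in the operators X, Y, and \<open>\<langle>Z a, Z b\<rangle> = B(Z, Z) / 2\<close>.  The two Kantor
identities rewrite \<open>B(\<langle>u,v\<rangle>, \<langle>p,q\<rangle>)\<close> as an expression in which a and b enter only through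
\<open>\<langle>a,b\<rangle>\<close>; by bilinearity the same holds for all X, Y in L.  Every other occurrence of a, b in
\<open>K\<^sub>a\<^sub>b\<close> is through \<open>\<langle>a,b\<rangle>\<close> anyway.\<close>

lemma (in module_pair) bilinear_eq_on_span:
  assumes "\<And>X. module_hom s1 s2 (f X)" and "\<And>Y. module_hom s1 s2 (\<lambda>X. f X Y)"
    and "\<And>X. module_hom s1 s2 (g X)" and "\<And>Y. module_hom s1 s2 (\<lambda>X. g X Y)"
    and "\<And>X Y. X \<in> B \<Longrightarrow> Y \<in> B \<Longrightarrow> f X Y = g X Y"
    and "X \<in> m1.span B" and "Y \<in> m1.span B"
  shows "f X Y = g X Y"
proof -
  have "f X' Y = g X' Y" if "X' \<in> B" for X'
    using module_hom_eq_on_span[OF assms(1)[of X'] assms(3)[of X'] assms(5)[OF that] assms(7)] .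
  then show ?thesis
    using module_hom_eq_on_span[OF assms(2)[of Y] assms(4)[of Y] _ assms(6)] by simp
qed

lemma module_opscale: "module s \<Longrightarrow> module (opscale s)"
  by (simp add: module_def opscale_def fun_eq_iff)

locale kantor_triple_system = vector_space s
  for s :: "'k::field \<Rightarrow> 'a::ab_group_add \<Rightarrow> 'a" +
  fixes t :: "'a \<Rightarrow> 'a \<Rightarrow> 'a \<Rightarrow> 'a"
  assumes trilinear: "trilinear s t"
    and derivation_identity: "t u v (t x y z) - t x y (t u v z) = t (t u v x) y z - t x (t v u y) z"
    and bracket_identity: "br t (br t u v x) y = (\<lambda>w. br t (t y x u) v w - br t (t y x v) u w)"

lemma fd_kts_imp_kantor_triple_system: "fd_kts s t \<Longrightarrow> kantor_triple_system s t"
  by (simp add: fd_kts_def kantor_triple_system_def kantor_triple_system_axioms_def)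

definition br_polar :: "('a::ab_group_add \<Rightarrow> 'a \<Rightarrow> 'a \<Rightarrow> 'a) \<Rightarrow> 'a \<Rightarrow> 'a \<Rightarrow> ('a \<Rightarrow> 'a) \<Rightarrow> ('a \<Rightarrow> 'a) \<Rightarrow> 'a \<Rightarrow> 'a"
  where "br_polar t a b X Y w = br t (X a) (Y b) w + br t (Y a) (X b) w"

context kantor_triple_system
begin

lemma module_hom_t:
  "module_hom s s (\<lambda>x. t x y z)" "module_hom s s (\<lambda>y. t x y z)" "module_hom s s (\<lambda>z. t x y z)"
  using trilinear by (simp_all add: trilinear_def linear_iff_module_hom)

lemmas t_diff =
  module_hom.diff[OF module_hom_t(1)] module_hom.diff[OF module_hom_t(2)] module_hom.diff[OF module_hom_t(3)]

lemma module_hom_br: "module_hom s s (\<lambda>x. br t x v w)" "module_hom s s (\<lambda>v. br t x v w)"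
  unfolding br_def
  by (simp_all add: module_pair.module_hom_sub module_pair_def module_axioms module_hom_t)

lemmas br_add = module_hom.add[OF module_hom_br(1)] module_hom.add[OF module_hom_br(2)]
lemmas br_scale = module_hom.scale[OF module_hom_br(1)] module_hom.scale[OF module_hom_br(2)]
lemmas br_diff = module_hom.diff[OF module_hom_br(1)]

lemma br_swap: "br t u v w = - br t v u w"
  by (simp add: br_def)

lemma bracket_exchange:
  "t (br t p q b) a u - t (br t p q a) b u = t p (br t a b q) u - t q (br t a b p) u"
proof -
  have expand: "t (t x y z) v w = t x y (t z v w) - t z v (t x y w) + t z (t y x v) w" for x y z v w
    using derivation_identity[of x y z v w] by (simp add: algebra_simps)
  show ?thesis
    unfolding br_def t_diff expand by (simp add: algebra_simps)
qed

lemma br_polar_br_br: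
  "br_polar t a b (br t u v) (br t p q) w =
     br t (t p (br t a b q) u - t q (br t a b p) u) v w - br t (t p (br t a b q) v - t q (br t a b p) v) u w"
proof -
  have identity: "br t (br t u v x) y w = br t (t y x u) v w - br t (t y x v) u w" for u v x y
    by (simp add: bracket_identity)
  have "br_polar t a b (br t u v) (br t p q) w =
      br t (br t u v a) (br t p q b) w - br t (br t u v b) (br t p q a) w"
    unfolding br_polar_def using br_swap[of "br t p q a"] by simp
  also have "\<dots> = br t (t (br t p q b) a u - t (br t p q a) b u) v w
      - br t (t (br t p q b) a v - t (br t p q a) b v) u w"
    unfolding identity br_diff by (simp add: algebra_simps)
  finally show ?thesis
    unfolding bracket_exchange .
qed

lemma module_hom_br_polar:
  "module_hom (opscale s) s (\<lambda>Y. br_polar t a b X Y w)"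
  "module_hom (opscale s) s (\<lambda>X. br_polar t a b X Y w)"
  by (simp_all add: module_hom_iff module_opscale module_axioms br_polar_def opscale_def br_add br_scale
      scale_right_distrib add_ac)

lemma br_polar_eq_on_Lspan:
  assumes "br t a b = br t c d" and "X \<in> Lspan s t" and "Y \<in> Lspan s t"
  shows "br_polar t a b X Y w = br_polar t c d X Y w"
proof -
  interpret module_pair "opscale s" s
    by (simp add: module_pair_def module_opscale module_axioms)
  have "br_polar t a b X' Y' w = br_polar t c d X' Y' w"
    if "X' \<in> {br t u v | u v. True}" and "Y' \<in> {br t u v | u v. True}" for X' Y'
  proof -
    from that obtain u v p q where "X' = br t u v" and "Y' = br t p q"
      by blast
    then show ?thesis
      using assms(1) by (simp only: br_polar_br_br)
  qed
  from bilinear_eq_on_span[OF module_hom_br_polar module_hom_br_polar this assms(2,3)[unfolded Lspan_def]]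
  show ?thesis .
qed

lemma br_image_eq_on_Lspan:
  assumes "(2::'k) \<noteq> 0" and "br t a b = br t c d" and "Z \<in> Lspan s t"
  shows "br t (Z a) (Z b) = br t (Z c) (Z d)"
proof
  fix w
  have half_double: "s (inverse 2) (v + v) = v" for v
  proof -
    have "v + v = s 2 v"
      using scale_left_distrib[of 1 1 v] by (simp add: one_add_one)
    then show ?thesis
      using assms(1) by simp
  qed
  have half_polar: "br t (Z x) (Z y) w = s (inverse 2) (br_polar t x y Z Z w)" for x y
    unfolding br_polar_def half_double ..
  show "br t (Z a) (Z b) w = br t (Z c) (Z d) w"
    unfolding half_polar br_polar_eq_on_Lspan[OF assms(2,3,3)] ..
qed

end

lemma Ktilde_eq_of_br_eq:
  fixes s :: "'k::field_char_0 \<Rightarrow> 'a::ab_group_add \<Rightarrow> 'a"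
  assumes "fd_kts s t" and "br t a b = br t c d" and "Z \<in> Lspan s t"
  shows "Ktilde s t a b (z, Z) = Ktilde s t c d (z, Z)"
proof -
  interpret kantor_triple_system s t
    using assms(1) by (rule fd_kts_imp_kantor_triple_system)
  show ?thesis
    using assms(2) br_image_eq_on_Lspan[OF _ assms(2,3)] by (simp add: Ktilde_def)
qed

theorem mainTheorem9:
  shows "(\<forall>(s::real \<Rightarrow> 'a::ab_group_add \<Rightarrow> 'a) t a b c d.
            fd_kts s t \<longrightarrow> br t a b = br t c d \<longrightarrow>
            (\<forall>z. \<forall>Z\<in>Lspan s t. Ktilde s t a b (z, Z) = Ktilde s t c d (z, Z)))
       \<and> (\<forall>(s::complex \<Rightarrow> 'b::ab_group_add \<Rightarrow> 'b) t a b c d.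
            fd_kts s t \<longrightarrow> br t a b = br t c d \<longrightarrow>
            (\<forall>z. \<forall>Z\<in>Lspan s t. Ktilde s t a b (z, Z) = Ktilde s t c d (z, Z)))"
  by (intro conjI allI impI ballI; erule Ktilde_eq_of_br_eq; assumption)

end
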